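(* Let $k\ge 2$, $h=3k+1$, and let $W\in\mathcal W^2_{h\times 4}$ be $2$-full. Then $W$ contains a bench with its seat in column $1$ and legs in column $2$, and a bench with its seat in column $4$ and legs in column $3$.
   Context: A 2-dimensional binary word of dimensions $h\times w$ is an $h\times w$ matrix with entries in $\{\square,\blacksquare\}$ (filled cells $\blacksquare$, empty cells $\square$). Two cells $(i,j),(i',j')$ are adjacent if $|i-i'|+|j-j'|=1$; the degree of a filled cell is the number of filled cells adjacent to it. $\mathcal W^2_{h\times w}$ is the set of $h\times w$ binary words in which every filled cell has degree at most $2$; $W$ is $2$-full if its number of filled cells is maximal in $\mathcal W^2_{h\times w}$. For columns $j,j'$ with $|j-j'|=1$, a bench with seat in column $j$ and legs in column $j'$ is given by integers $n\ge 3$ and $i$ with $1\le i\le i+n-1\le h$ such that the cells $(i,j),(i+1,j),\dots,(i+n-1,j)$ are all filled, the cells $(i,j')$ and $(i+n-1,j')$ are filled, and the cells $(i+1,j'),\dots,(i+n-2,j')$ are empty. *)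

theory Defs
  imports Main
begin

text \<open>A binary word of dimensions h x w is represented by its set of filled cells,
  a subset of {1..h} x {1..w} (rows i, columns j, 1-indexed).\<close>

definition adj :: "nat \<times> nat \<Rightarrow> nat \<times> nat \<Rightarrow> bool" where
  "adj c d \<longleftrightarrow> (fst c = fst d \<and> (snd c = snd d + 1 \<or> snd d = snd c + 1))
              \<or> (snd c = snd d \<and> (fst c = fst d + 1 \<or> fst d = fst c + 1))"

definition degree :: "(nat \<times> nat) set \<Rightarrow> nat \<times> nat \<Rightarrow> nat" where
  "degree W c = card {d \<in> W. adj c d}"

definition W2 :: "nat \<Rightarrow> nat \<Rightarrow> (nat \<times> nat) set set" where
  "W2 h w = {W. W \<subseteq> {1..h} \<times> {1..w} \<and> (\<forall>c\<in>W. degree W c \<le> 2)}"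

definition two_full :: "nat \<Rightarrow> nat \<Rightarrow> (nat \<times> nat) set \<Rightarrow> bool" where
  "two_full h w W \<longleftrightarrow> W \<in> W2 h w \<and> (\<forall>V\<in>W2 h w. card V \<le> card W)"

definition has_bench :: "nat \<Rightarrow> (nat \<times> nat) set \<Rightarrow> nat \<Rightarrow> nat \<Rightarrow> bool" where
  "has_bench h W j j' \<longleftrightarrow> (j = j' + 1 \<or> j' = j + 1) \<and>
     (\<exists>n i. n \<ge> 3 \<and> 1 \<le> i \<and> i + n - 1 \<le> h \<and>
        (\<forall>t<n. (i + t, j) \<in> W) \<and>
        (i, j') \<in> W \<and> (i + n - 1, j') \<in> W \<and>
        (\<forall>t. 1 \<le> t \<and> t \<le> n - 2 \<longrightarrow> (i + t, j') \<notin> W))"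

end

theory Submission
  imports Defs "HOL-Library.Option_ord"
begin

text \<open>The zigzag word, whose rows repeat the patterns \<open>{1, 2, 4}\<close>,
  \<open>{1, 3, 4}\<close>, \<open>{2, 3}\<close> and which has one extra cell in each end row, lies in \<open>W\<^sup>2\<close>
  and has \<open>8k + 4\<close> cells. Conversely, scan a word row by row, remembering the last two rows and
  whether column 1 carries a seat whose second leg is still missing. A potential on these finitely
  many states, verified by exhaustive case analysis, shows that \<open>3 * (cells in rows 1..m) - 8m\<close>
  stays bounded as long as no bench with seat in column 1 is completed; at \<open>m = h = 3k + 1\<close> this
  gives at most \<open>8k + 3\<close> cells. So a 2-full word contains such a bench, and reflecting the
  columns gives the bench with seat in column 4.\<close>

definition middle_row_ok ::
    "bool \<Rightarrow> bool \<Rightarrow> bool \<Rightarrow> bool \<Rightarrow> bool \<Rightarrow> bool \<Rightarrow> bool \<Rightarrow> bool \<Rightarrow>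
     bool \<Rightarrow> bool \<Rightarrow> bool \<Rightarrow> bool \<Rightarrow> bool" where
  "middle_row_ok p1 p2 p3 p4 c1 c2 c3 c4 n1 n2 n3 n4 \<longleftrightarrow>
     (c1 \<longrightarrow> of_bool p1 + of_bool c2 + of_bool n1 \<le> (2::nat)) \<and>
     (c2 \<longrightarrow> of_bool p2 + of_bool c1 + of_bool c3 + of_bool n2 \<le> (2::nat)) \<and>
     (c3 \<longrightarrow> of_bool p3 + of_bool c2 + of_bool c4 + of_bool n3 \<le> (2::nat)) \<and>
     (c4 \<longrightarrow> of_bool p4 + of_bool c3 + of_bool n4 \<le> (2::nat))"

definition row_ok :: "(nat \<times> nat) set \<Rightarrow> nat \<Rightarrow> bool" where
  "row_ok W i \<longleftrightarrow> middle_row_ok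
     ((i - 1, 1) \<in> W) ((i - 1, 2) \<in> W) ((i - 1, 3) \<in> W) ((i - 1, 4) \<in> W)
     ((i, 1) \<in> W) ((i, 2) \<in> W) ((i, 3) \<in> W) ((i, 4) \<in> W)
     ((i + 1, 1) \<in> W) ((i + 1, 2) \<in> W) ((i + 1, 3) \<in> W) ((i + 1, 4) \<in> W)"

lemma degree_eq:
  assumes "1 \<le> i" "1 \<le> j"
  shows "degree W (i, j) = of_bool ((i - 1, j) \<in> W) + of_bool ((i, j - 1) \<in> W)
                         + of_bool ((i, j + 1) \<in> W) + of_bool ((i + 1, j) \<in> W)"
proof -
  have "{d \<in> W. adj (i, j) d} = {(i - 1, j), (i, j - 1), (i, j + 1), (i + 1, j)} \<inter> {d. d \<in> W}"
    using assms by (auto simp: adj_def)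
  then have "degree W (i, j) = (\<Sum>d\<in>{(i - 1, j), (i, j - 1), (i, j + 1), (i + 1, j)}. of_bool (d \<in> W))"
    by (simp add: degree_def)
  also have "\<dots> = of_bool ((i - 1, j) \<in> W) + of_bool ((i, j - 1) \<in> W)
                   + of_bool ((i, j + 1) \<in> W) + of_bool ((i + 1, j) \<in> W)"
  proof -
    have "(i - 1, j) \<notin> {(i, j - 1), (i, j + 1), (i + 1, j)}" "(i, j - 1) \<notin> {(i, j + 1), (i + 1, j)}"
      "(i, j + 1) \<noteq> (i + 1, j)"
      using assms by auto
    then show ?thesis
      by (simp only: sum.insert finite.emptyI finite_insert sum.empty insert_iff empty_iff) simp
  qed
  finally show ?thesis .
qed

lemma degree_in_4_columns:
  assumes "1 \<le> i" and "W \<subseteq> UNIV \<times> {1..4}"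
  shows "degree W (i, 1) = of_bool ((i - 1, 1) \<in> W) + of_bool ((i, 2) \<in> W) + of_bool ((i + 1, 1) \<in> W)"
    and "degree W (i, 2) = of_bool ((i - 1, 2) \<in> W) + of_bool ((i, 1) \<in> W) + of_bool ((i, 3) \<in> W)
                           + of_bool ((i + 1, 2) \<in> W)"
    and "degree W (i, 3) = of_bool ((i - 1, 3) \<in> W) + of_bool ((i, 2) \<in> W) + of_bool ((i, 4) \<in> W)
                           + of_bool ((i + 1, 3) \<in> W)"
    and "degree W (i, 4) = of_bool ((i - 1, 4) \<in> W) + of_bool ((i, 3) \<in> W) + of_bool ((i + 1, 4) \<in> W)"
proof -
  have outside: "(i, 0) \<notin> W" "(i, 5) \<notin> W"
    using assms(2) by auto
  \<comment> \<open>\<open>simp\<close> rewrites \<open>1\<close> to \<open>Suc 0\<close> but keeps \<open>2\<close>, so column arithmetic is done first\<close>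
  have arith: "(1::nat) - 1 = 0" "(1::nat) + 1 = 2" "(2::nat) - 1 = 1" "(2::nat) + 1 = 3"
    "(3::nat) - 1 = 2" "(3::nat) + 1 = 4" "(4::nat) - 1 = 3" "(4::nat) + 1 = 5"
    by simp_all
  show "degree W (i, 1) = of_bool ((i - 1, 1) \<in> W) + of_bool ((i, 2) \<in> W) + of_bool ((i + 1, 1) \<in> W)"
    using degree_eq[of i 1 W, unfolded arith] assms(1) outside by simp
  show "degree W (i, 2) = of_bool ((i - 1, 2) \<in> W) + of_bool ((i, 1) \<in> W) + of_bool ((i, 3) \<in> W)
                           + of_bool ((i + 1, 2) \<in> W)"
    using degree_eq[of i 2 W, unfolded arith] assms(1) by simp
  show "degree W (i, 3) = of_bool ((i - 1, 3) \<in> W) + of_bool ((i, 2) \<in> W) + of_bool ((i, 4) \<in> W)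
                           + of_bool ((i + 1, 3) \<in> W)"
    using degree_eq[of i 3 W, unfolded arith] assms(1) by simp
  show "degree W (i, 4) = of_bool ((i - 1, 4) \<in> W) + of_bool ((i, 3) \<in> W) + of_bool ((i + 1, 4) \<in> W)"
    using degree_eq[of i 4 W, unfolded arith] assms(1) outside by simp
qed

lemma W2_iff_row_ok:
  assumes sub: "W \<subseteq> {1..h} \<times> {1..4}"
  shows "W \<in> W2 h 4 \<longleftrightarrow> (\<forall>i\<in>{1..h}. row_ok W i)"
proof -
  have cols: "W \<subseteq> UNIV \<times> {1..4}"
    using sub by auto
  have "row_ok W i \<longleftrightarrow> (\<forall>j\<in>{1, 2, 3, 4}. (i, j) \<in> W \<longrightarrow> degree W (i, j) \<le> 2)" if "1 \<le> i" for i
  proof -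
    have "(\<forall>j\<in>{1, 2, 3, 4}. (i, j) \<in> W \<longrightarrow> degree W (i, j) \<le> 2) \<longleftrightarrow>
        ((i, 1) \<in> W \<longrightarrow> degree W (i, 1) \<le> 2) \<and> ((i, 2) \<in> W \<longrightarrow> degree W (i, 2) \<le> 2) \<and>
        ((i, 3) \<in> W \<longrightarrow> degree W (i, 3) \<le> 2) \<and> ((i, 4) \<in> W \<longrightarrow> degree W (i, 4) \<le> 2)"
      by simp
    then show ?thesis
      unfolding row_ok_def middle_row_ok_def degree_in_4_columns[OF that cols] by (rule sym)
  qed
  moreover have "{1..4::nat} = {1, 2, 3, 4}"
    by auto
  then have "W \<in> W2 h 4 \<longleftrightarrow> (\<forall>i\<in>{1..h}. \<forall>j\<in>{1, 2, 3, 4}. (i, j) \<in> W \<longrightarrow> degree W (i, j) \<le> 2)"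
    using sub unfolding W2_def by auto
  ultimately show ?thesis
    by auto
qed

lemma W2_subset: "W \<in> W2 h w \<Longrightarrow> W \<subseteq> {1..h} \<times> {1..w}"
  by (simp add: W2_def)

definition row_count :: "(nat \<times> nat) set \<Rightarrow> nat \<Rightarrow> nat" where
  "row_count W i = card {j. (i, j) \<in> W}"

lemma row_count_eq:
  assumes "W \<subseteq> UNIV \<times> {1..4}"
  shows "int (row_count W i) = of_bool ((i, 1) \<in> W) + of_bool ((i, 2) \<in> W)
                              + of_bool ((i, 3) \<in> W) + of_bool ((i, 4) \<in> W)"
proof -
  have "{j. (i, j) \<in> W} = {1, 2, 3, 4} \<inter> {j. (i, j) \<in> W}"
    using assms by auto
  then have "int (row_count W i) = (\<Sum>j\<in>{1, 2, 3, 4}. of_bool ((i, j) \<in> W))"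
    by (simp add: row_count_def)
  then show ?thesis by simp
qed

lemma card_eq_sum_row_count:
  assumes "W \<subseteq> {1..h} \<times> {1..4}"
  shows "card W = (\<Sum>i=1..h. row_count W i)"
proof -
  have "W = Sigma {1..h} (\<lambda>i. {j. (i, j) \<in> W})"
    using assms by auto
  moreover have "finite {j. (i, j) \<in> W}" for i
    by (rule finite_subset[of _ "{1..4}"]) (use assms in auto)
  ultimately show ?thesis
    by (metis (no_types, lifting) card_SigmaI finite_atLeastAtMost row_count_def sum.cong)
qed

definition mirror :: "(nat \<times> nat) set \<Rightarrow> (nat \<times> nat) set" where
  "mirror W = (\<lambda>(i, j). (i, 5 - j)) ` W"

lemma mem_mirror:
  assumes "W \<subseteq> UNIV \<times> {1..4}"
  shows "(i, j) \<in> mirror W \<longleftrightarrow> j \<in> {1..4} \<and> (i, 5 - j) \<in> W"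
proof
  assume "(i, j) \<in> mirror W"
  then obtain b where "(i, b) \<in> W" "j = 5 - b"
    by (auto simp: mirror_def)
  moreover from this have "b \<in> {1..4}"
    using assms by auto
  ultimately show "j \<in> {1..4} \<and> (i, 5 - j) \<in> W"
    by auto
next
  assume "j \<in> {1..4} \<and> (i, 5 - j) \<in> W"
  then have "(i, 5 - (5 - j)) \<in> mirror W"
    unfolding mirror_def by (auto intro: image_eqI[of _ _ "(i, 5 - j)"])
  with \<open>j \<in> {1..4} \<and> _\<close> show "(i, j) \<in> mirror W" by simp
qed

lemma mirror_subset: "W \<subseteq> {1..h} \<times> {1..4} \<Longrightarrow> mirror W \<subseteq> {1..h} \<times> {1..4}"
  by (fastforce simp: mirror_def)

lemma card_mirror:
  assumes "W \<subseteq> UNIV \<times> {1..4}"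
  shows "card (mirror W) = card W"
proof -
  have "inj_on (\<lambda>(i, j). (i, 5 - j :: nat)) W"
    using assms by (fastforce simp: inj_on_def)
  then show ?thesis by (simp add: mirror_def card_image)
qed

lemma row_ok_mirror:
  assumes "W \<subseteq> UNIV \<times> {1..4}"
  shows "row_ok (mirror W) i \<longleftrightarrow> row_ok W i"
  using assms by (simp add: row_ok_def middle_row_ok_def mem_mirror ac_simps)

lemma two_full_mirror:
  assumes "two_full h 4 W"
  shows "two_full h 4 (mirror W)"
proof -
  have W: "W \<in> W2 h 4" and max: "\<forall>V\<in>W2 h 4. card V \<le> card W"
    using assms by (auto simp: two_full_def)
  have sub: "W \<subseteq> {1..h} \<times> {1..4}"
    using W by (rule W2_subset)
  have "mirror W \<in> W2 h 4"
    using W W2_iff_row_ok[OF sub] W2_iff_row_ok[OF mirror_subset[OF sub]] row_ok_mirror sub by blast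
  moreover have "card (mirror W) = card W"
    using sub by (intro card_mirror) auto
  ultimately show ?thesis
    using max by (simp add: two_full_def)
qed

lemma has_bench_mirror:
  assumes "W \<subseteq> UNIV \<times> {1..4}" and "has_bench h (mirror W) 1 2"
  shows "has_bench h W 4 3"
  using assms by (simp add: has_bench_def mem_mirror)

definition open_seat :: "(nat \<times> nat) set \<Rightarrow> nat \<Rightarrow> bool" where
  "open_seat W i \<longleftrightarrow>
     (\<exists>s\<in>{1..i}. (s, 2) \<in> W \<and> (\<forall>t\<in>{s..i}. (t, 1) \<in> W) \<and> (\<forall>t\<in>{s<..i}. (t, 2) \<notin> W))"

lemma open_seat_0: "\<not> open_seat W 0"
  by (simp add: open_seat_def)

lemma open_seat_Suc:
  "open_seat W (Suc i) \<longleftrightarrow> (Suc i, 1) \<in> W \<and> ((Suc i, 2) \<in> W \<or> open_seat W i)"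
proof
  assume "open_seat W (Suc i)"
  then obtain s where s: "s \<in> {1..Suc i}" "(s, 2) \<in> W"
      "\<forall>t\<in>{s..Suc i}. (t, 1) \<in> W" "\<forall>t\<in>{s<..Suc i}. (t, 2) \<notin> W"
    unfolding open_seat_def by blast
  show "(Suc i, 1) \<in> W \<and> ((Suc i, 2) \<in> W \<or> open_seat W i)"
  proof (cases "s = Suc i")
    case True
    with s show ?thesis by auto
  next
    case False
    with s have "open_seat W i"
      unfolding open_seat_def by (intro bexI[of _ s]) auto
    with s show ?thesis by auto
  qed
next
  assume new: "(Suc i, 1) \<in> W \<and> ((Suc i, 2) \<in> W \<or> open_seat W i)"
  show "open_seat W (Suc i)"
  proof (cases "(Suc i, 2) \<in> W")
    case True
    with new show ?thesis
      unfolding open_seat_def by (intro bexI[of _ "Suc i"]) auto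
  next
    case False
    with new obtain s where s: "s \<in> {1..i}" "(s, 2) \<in> W"
        "\<forall>t\<in>{s..i}. (t, 1) \<in> W" "\<forall>t\<in>{s<..i}. (t, 2) \<notin> W"
      unfolding open_seat_def by blast
    with new False show ?thesis
      unfolding open_seat_def by (intro bexI[of _ s]) (auto simp: le_Suc_eq)
  qed
qed

lemma has_bench_if_seat_closes:
  assumes "open_seat W i" "(i, 2) \<notin> W" "(Suc i, 1) \<in> W" "(Suc i, 2) \<in> W" "i < h"
  shows "has_bench h W 1 2"
proof -
  obtain s where s: "s \<in> {1..i}" "(s, 2) \<in> W"
      "\<forall>t\<in>{s..i}. (t, 1) \<in> W" "\<forall>t\<in>{s<..i}. (t, 2) \<notin> W"
    using assms(1) unfolding open_seat_def by blast
  have "s < i"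
    using s(1,2) assms(2) by (cases "s = i") auto
  have seat: "(s + t, 1) \<in> W" if "t < i + 2 - s" for t
    using s(3) assms(3) that by (cases "s + t = Suc i") auto
  show ?thesis
    unfolding has_bench_def
  proof (intro conjI exI)
    show "\<forall>t<i + 2 - s. (s + t, 1) \<in> W"
      using seat by blast
  qed (use s \<open>s < i\<close> assms in auto)
qed

text \<open>The state of a word after row \<open>m\<close> is the pair of rows \<open>p = m - 1\<close>, \<open>c = m\<close>
  together with \<open>f = open_seat W m\<close>. For \<open>m \<ge> 2\<close>, \<open>potential p c f\<close> bounds
  \<open>3 * (filled cells in rows 1..m) - 8 * m\<close> over all words in \<open>W\<^sup>2\<close> without a bench
  with seat in column 1 that reach this state; \<open>None\<close> marks states that never occur.
  The values are the least solution of \<open>potential_start\<close> and \<open>potential_step\<close>, found by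
  dynamic programming. The bound fails for \<open>m = 1\<close> (a full first row), hence the start at row 2.\<close>

definition potential ::
    "bool \<Rightarrow> bool \<Rightarrow> bool \<Rightarrow> bool \<Rightarrow> bool \<Rightarrow> bool \<Rightarrow> bool \<Rightarrow> bool \<Rightarrow> bool \<Rightarrow> int option" where
  "potential p1 p2 p3 p4 c1 c2 c3 c4 f =
    (if f then
      (if c1 then
        (if p1 then
          (if c2 then
            (if p2 then
              (if c4 then
                (if p4 then
                  (if c3 then (if p3 then None else Some 5) else Some 2)
                 else
                  (if c3 then (if p3 then None else Some 2) else Some (-1)))
               else
                (if c3 then (if p3 then None else Some 2) else Some (-1)))
             else
              (if c4 then
                (if p4 then
                  (if c3 then (if p3 then Some 5 else Some 3) else Some 2)
                 else
                  (if c3 then (if p3 then Some 3 else Some 2) else Some 0))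
               else
                (if c3 then (if p3 then Some 2 else Some 0) else Some 0)))
           else
            (if c4 then
              (if p4 then (if c3 then Some 3 else Some 2) else (if c3 then Some 2 else Some (-1)))
             else
              (if c3 then (if p3 then Some 1 else Some 0) else Some (-1))))
         else
          (if c2 then
            (if p2 then
              (if c4 then
                (if p4 then
                  (if c3 then (if p3 then None else Some 4) else Some 2)
                 else
                  (if c3 then (if p3 then Some 4 else Some 2) else Some 2))
               else
                Some 1)
             else
              (if c4 then
                (if p4 then
                  (if c3 then Some 3 else Some 0)
                 else
                  (if c3 then (if p3 then Some 2 else Some 0) else Some (-1)))
               else
                (if c3 then (if p3 then Some 1 else Some 0) else Some (-2))))
           else
            None))
       else
        None)
     else
      (if c1 then
        (if p1 then
          (if c2 then
            None
           else
            (if c4 then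
              (if p4 then
                (if c3 then (if p3 then Some 2 else Some 0) else Some (-1))
               else
                (if c3 then (if p3 then Some 0 else Some (-1)) else Some (-3)))
             else
              (if c3 then (if p3 then Some (-1) else Some (-3)) else Some (-3))))
         else
          (if c2 then
            None
           else
            (if c4 then
              (if p4 then
                (if c3 then (if p3 then Some 0 else Some 1) else Some (-1))
               else
                (if c3 then (if p3 then Some 1 else Some (-1)) else Some (-1)))
             else
              Some (-2))))
       else
        (if c2 then
          (if p2 then
            (if c4 then
              (if p4 then
                (if c3 then (if p3 then None else Some 3) else Some 0)
               else
                (if c3 then Some 1 else Some (-1)))
             else
              (if c3 then (if p3 then Some (-2) else Some 0) else Some (-2)))
           else
            (if c4 then
              (if p4 then
                (if c3 then Some 3 else Some 0)
               else
                (if c3 then (if p3 then Some 2 else Some 0) else Some (-1)))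
             else
              (if c3 then (if p3 then Some 1 else Some 0) else Some (-2))))
         else
          (if c4 then
            (if p4 then
              (if c3 then Some 0 else Some (-1))
             else
              (if c3 then Some (-1) else Some (-3)))
           else
            (if c3 then (if p3 then Some (-2) else Some (-3)) else Some (-4))))))"

lemma potential_start:
  assumes "middle_row_ok False False False False c1 c2 c3 c4 n1 n2 n3 n4"
  shows "Some (3 * ((of_bool c1 + of_bool c2 + of_bool c3 + of_bool c4)
                 + (of_bool n1 + of_bool n2 + of_bool n3 + of_bool n4)) - 16)
           \<le> potential c1 c2 c3 c4 n1 n2 n3 n4 (n1 \<and> (n2 \<or> c1 \<and> c2))"
proof -
  have "\<forall>c1 c2 c3 c4 n1 n2 n3 n4.
     middle_row_ok False False False False c1 c2 c3 c4 n1 n2 n3 n4 \<longrightarrow>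
     Some (3 * ((of_bool c1 + of_bool c2 + of_bool c3 + of_bool c4)
              + (of_bool n1 + of_bool n2 + of_bool n3 + of_bool n4)) - 16)
       \<le> potential c1 c2 c3 c4 n1 n2 n3 n4 (n1 \<and> (n2 \<or> c1 \<and> c2))"
    unfolding all_bool_eq by (simp add: potential_def middle_row_ok_def)
  from this[rule_format, OF assms] show ?thesis .
qed

lemma potential_step:
  assumes "middle_row_ok p1 p2 p3 p4 c1 c2 c3 c4 n1 n2 n3 n4" and "\<not> (f \<and> \<not> c2 \<and> n1 \<and> n2)"
  shows "map_option (\<lambda>x. x + 3 * (of_bool n1 + of_bool n2 + of_bool n3 + of_bool n4) - 8)
           (potential p1 p2 p3 p4 c1 c2 c3 c4 f)
           \<le> potential c1 c2 c3 c4 n1 n2 n3 n4 (n1 \<and> (n2 \<or> f))"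
proof -
  have "\<forall>p1 p2 p3 p4 c1 c2 c3 c4 n1 n2 n3 n4 f.
     middle_row_ok p1 p2 p3 p4 c1 c2 c3 c4 n1 n2 n3 n4 \<longrightarrow> \<not> (f \<and> \<not> c2 \<and> n1 \<and> n2) \<longrightarrow>
     map_option (\<lambda>x. x + 3 * (of_bool n1 + of_bool n2 + of_bool n3 + of_bool n4) - 8)
       (potential p1 p2 p3 p4 c1 c2 c3 c4 f)
       \<le> potential c1 c2 c3 c4 n1 n2 n3 n4 (n1 \<and> (n2 \<or> f))"
    unfolding all_bool_eq by (simp add: potential_def middle_row_ok_def)
  from this[rule_format, OF assms] show ?thesis .
qed

lemma potential_final:
  assumes "middle_row_ok p1 p2 p3 p4 c1 c2 c3 c4 False False False False"
  shows "potential p1 p2 p3 p4 c1 c2 c3 c4 f \<le> Some 3"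
proof -
  have "\<forall>p1 p2 p3 p4 c1 c2 c3 c4 f.
     middle_row_ok p1 p2 p3 p4 c1 c2 c3 c4 False False False False \<longrightarrow>
     potential p1 p2 p3 p4 c1 c2 c3 c4 f \<le> Some 3"
    unfolding all_bool_eq by (simp add: potential_def middle_row_ok_def)
  from this[rule_format, OF assms] show ?thesis .
qed

definition state_potential :: "(nat \<times> nat) set \<Rightarrow> nat \<Rightarrow> int option" where
  "state_potential W i = potential
     ((i - 1, 1) \<in> W) ((i - 1, 2) \<in> W) ((i - 1, 3) \<in> W) ((i - 1, 4) \<in> W)
     ((i, 1) \<in> W) ((i, 2) \<in> W) ((i, 3) \<in> W) ((i, 4) \<in> W) (open_seat W i)"

lemma state_potential_2:
  assumes "W \<in> W2 h 4" and "2 \<le> h"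
  shows "Some (3 * int (row_count W 1 + row_count W 2) - 16) \<le> state_potential W 2"
proof -
  have sub: "W \<subseteq> {1..h} \<times> {1..4}"
    using assms(1) by (rule W2_subset)
  then have "row_ok W 1"
    using assms W2_iff_row_ok by auto
  moreover have "(0, j) \<notin> W" for j
    using sub by auto
  ultimately have "middle_row_ok False False False False
      ((1, 1) \<in> W) ((1, 2) \<in> W) ((1, 3) \<in> W) ((1, 4) \<in> W)
      ((2, 1) \<in> W) ((2, 2) \<in> W) ((2, 3) \<in> W) ((2, 4) \<in> W)"
    by (simp add: row_ok_def del: One_nat_def)
  note start = potential_start[OF this]
  have "open_seat W 2 \<longleftrightarrow> (2, 1) \<in> W \<and> ((2, 2) \<in> W \<or> (1, 1) \<in> W \<and> (1, 2) \<in> W)"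
    using open_seat_Suc[of W 1, unfolded Suc_1] open_seat_Suc[of W 0, unfolded One_nat_def[symmetric]]
      open_seat_0[of W]
    by simp
  moreover have "W \<subseteq> UNIV \<times> {1..4}"
    using sub by auto
  ultimately show ?thesis
    using start by (simp add: state_potential_def row_count_eq)
qed

lemma state_potential_Suc:
  assumes W: "W \<in> W2 h 4" and "\<not> has_bench h W 1 2" and "1 \<le> m" "m < h"
  shows "map_option (\<lambda>x. x + 3 * int (row_count W (Suc m)) - 8) (state_potential W m)
           \<le> state_potential W (Suc m)"
proof -
  have sub: "W \<subseteq> {1..h} \<times> {1..4}"
    using W by (rule W2_subset)
  then have "row_ok W m"
    using assms W2_iff_row_ok by auto
  moreover have "\<not> (open_seat W m \<and> \<not> (m, 2) \<in> W \<and> (Suc m, 1) \<in> W \<and> (Suc m, 2) \<in> W)"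
    using has_bench_if_seat_closes[of W m h] assms by auto
  moreover have "W \<subseteq> UNIV \<times> {1..4}"
    using sub by auto
  ultimately show ?thesis
    unfolding state_potential_def open_seat_Suc row_count_eq[OF \<open>W \<subseteq> UNIV \<times> {1..4}\<close>] diff_Suc_1
    by (intro potential_step) (simp_all add: row_ok_def)
qed

lemma state_potential_bound:
  assumes W: "W \<in> W2 h 4" and no_bench: "\<not> has_bench h W 1 2" and "2 \<le> m" "m \<le> h"
  shows "Some (3 * int (\<Sum>i=1..m. row_count W i) - 8 * int m) \<le> state_potential W m"
  using \<open>2 \<le> m\<close> \<open>m \<le> h\<close>
proof (induction m rule: nat_induct_at_least)
  case base
  have "{1..2::nat} = {1, 2}"
    by auto
  then show ?case
    using state_potential_2[OF W base] by simp
next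
  case (Suc m)
  let ?step = "\<lambda>x. x + 3 * int (row_count W (Suc m)) - 8"
  have "Some (3 * int (\<Sum>i=1..Suc m. row_count W i) - 8 * int (Suc m))
      = map_option ?step (Some (3 * int (\<Sum>i=1..m. row_count W i) - 8 * int m))"
    by simp
  also have "\<dots> \<le> map_option ?step (state_potential W m)"
    using Suc by (cases "state_potential W m") auto
  also have "\<dots> \<le> state_potential W (Suc m)"
    using Suc by (intro state_potential_Suc[OF W no_bench]) auto
  finally show ?case .
qed

lemma card_le_if_no_bench_1_2:
  assumes W: "W \<in> W2 h 4" and no_bench: "\<not> has_bench h W 1 2" and "2 \<le> h"
  shows "3 * card W \<le> 8 * h + 3"
proof -
  have sub: "W \<subseteq> {1..h} \<times> {1..4}"
    using W by (rule W2_subset)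
  have "row_ok W h"
    using W W2_iff_row_ok[OF sub] assms by auto
  moreover have "(h + 1, j) \<notin> W" for j
    using sub by auto
  ultimately have "state_potential W h \<le> Some 3"
    unfolding state_potential_def by (intro potential_final) (simp add: row_ok_def)
  moreover have "Some (3 * int (card W) - 8 * int h) \<le> state_potential W h"
    using state_potential_bound[OF W no_bench \<open>2 \<le> h\<close> order_refl]
    by (simp add: card_eq_sum_row_count[OF sub])
  ultimately show ?thesis
    by (cases "state_potential W h") auto
qed

definition zigzag_row :: "nat \<Rightarrow> nat set" where
  "zigzag_row i = (if i mod 3 = 0 then {1, 3, 4} else if i mod 3 = 1 then {2, 3} else {1, 2, 4})"

definition zigzag :: "nat \<Rightarrow> (nat \<times> nat) set" where
  "zigzag h = Sigma {1..h} zigzag_row \<union> {(1, 4), (h, 1)}"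

lemma mem_zigzag:
  "(i, j) \<in> zigzag h \<longleftrightarrow> (i \<in> {1..h} \<and> j \<in> zigzag_row i) \<or> (i, j) = (1, 4) \<or> (i, j) = (h, 1)"
  by (auto simp: zigzag_def)

lemma zigzag_row_ok:
  assumes h: "h = 3 * k + 1" "1 \<le> k" and i: "i \<in> {1..h}"
  shows "row_ok (zigzag h) i"
proof -
  \<comment> \<open>\<open>h - 1 - 1\<close> rather than \<open>h - 2\<close>: the form in which row \<open>h - 1\<close> refers to the row above\<close>
  have "h - 1 - 1 = 3 * (k - 1) + 2"
    using h by simp
  then have "(h - 1 - 1) mod 3 = 2"
    by (simp only: mod_mult_self4) simp
  moreover have "h mod 3 = 1" "4 \<le> h" "(h - 1) mod 3 = 0"
    using h by auto
  ultimately have h_facts: "(h - 1 - 1) mod 3 = 2" "h mod 3 = 1" "4 \<le> h" "(h - 1) mod 3 = 0"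
    by blast+
  consider "i = 1" | "i = 2" | "3 \<le> i" "i + 2 \<le> h" | "i = h - 1" | "i = h"
    using i h_facts by fastforce
  then show ?thesis
  proof cases
    case 1
    then show ?thesis
      using h_facts by (simp add: row_ok_def middle_row_ok_def mem_zigzag zigzag_row_def)
  next
    case 2
    then show ?thesis
      using h_facts by (simp add: row_ok_def middle_row_ok_def mem_zigzag zigzag_row_def)
  next
    case 3
    define r where "r = i mod 3"
    have "(i - 1) mod 3 = (i - 1 + 3) mod 3"
      by simp
    also have "i - 1 + 3 = i + 2"
      using 3 by simp
    finally have "(i - 1) mod 3 = (i + 2) mod 3" .
    then have residues: "i mod 3 = r" "(i - 1) mod 3 = (r + 2) mod 3" "(i + 1) mod 3 = (r + 1) mod 3"
      unfolding r_def by (simp_all only: mod_add_left_eq)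
    have rows: "(i - 1, j) \<in> zigzag h \<longleftrightarrow> j \<in> zigzag_row (i - 1)"
        "(i, j) \<in> zigzag h \<longleftrightarrow> j \<in> zigzag_row i"
        "(i + 1, j) \<in> zigzag h \<longleftrightarrow> j \<in> zigzag_row (i + 1)" for j
      using 3 by (auto simp: mem_zigzag)
    have "r < 3"
      unfolding r_def by simp
    then consider "r = 0" | "r = 1" | "r = 2"
      by linarith
    then show ?thesis
      unfolding row_ok_def rows zigzag_row_def residues
      by cases (simp_all add: middle_row_ok_def)
  next
    case 4
    then show ?thesis
      using h_facts by (simp add: row_ok_def middle_row_ok_def mem_zigzag zigzag_row_def)
  next
    case 5
    then show ?thesis
      using h_facts by (simp add: row_ok_def middle_row_ok_def mem_zigzag zigzag_row_def)
  qed
qed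

lemma card_zigzag_rows: "(\<Sum>i=1..3 * k + 1. card (zigzag_row i)) = 8 * k + 2"
proof (induction k)
  case 0
  show ?case
    by (simp add: zigzag_row_def)
next
  case (Suc k)
  have "{1..3 * Suc k + 1} = {1..3 * k + 1} \<union> {3 * k + 2, 3 * k + 3, 3 * k + 4}"
    by auto
  moreover have "(3 * k + 2) mod 3 = 2" "(3 * k + 3) mod 3 = 0" "(3 * k + 4) mod 3 = 1"
    by presburger+
  ultimately show ?case
    using Suc.IH by (simp add: zigzag_row_def)
qed

lemma card_zigzag:
  assumes "h = 3 * k + 1"
  shows "card (zigzag h) = 8 * k + 4"
proof -
  have "h mod 3 = 1"
    using assms by simp
  then have "{(1, 4), (h, 1)} \<inter> Sigma {1..h} zigzag_row = {}"
    by (auto simp: zigzag_row_def)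
  moreover have "card (Sigma {1..h} zigzag_row) = 8 * k + 2"
    using assms card_zigzag_rows by (simp add: card_SigmaI zigzag_row_def)
  moreover have "card {(1::nat, 4::nat), (h, 1)} = 2"
    by simp
  ultimately show ?thesis
    unfolding zigzag_def by (subst card_Un_disjoint) (auto simp: zigzag_row_def)
qed

lemma zigzag_in_W2:
  assumes "h = 3 * k + 1" "1 \<le> k"
  shows "zigzag h \<in> W2 h 4"
proof -
  have "zigzag h \<subseteq> {1..h} \<times> {1..4}"
    using assms by (auto simp: zigzag_def zigzag_row_def split: if_splits)
  then show ?thesis
    using W2_iff_row_ok zigzag_row_ok[OF assms] by blast
qed

lemma two_full_has_bench_1_2:
  assumes "h = 3 * k + 1" "1 \<le> k" "two_full h 4 W"
  shows "has_bench h W 1 2"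
proof (rule ccontr)
  assume no_bench: "\<not> has_bench h W 1 2"
  have W: "W \<in> W2 h 4"
    using assms(3) by (simp add: two_full_def)
  have "8 * k + 4 \<le> card W"
    using assms zigzag_in_W2 card_zigzag by (metis two_full_def)
  moreover have "3 * card W \<le> 8 * h + 3"
    using card_le_if_no_bench_1_2[OF W no_bench] assms by simp
  ultimately show False
    using assms by linarith
qed

theorem mainTheorem17:
  fixes k h :: nat and W :: "(nat \<times> nat) set"
  assumes "k \<ge> 2" and "h = 3 * k + 1" and "two_full h 4 W"
  shows "has_bench h W 1 2 \<and> has_bench h W 4 3"
proof
  have k: "1 \<le> k"
    using assms(1) by simp
  show "has_bench h W 1 2"
    using two_full_has_bench_1_2[OF assms(2) k assms(3)] .
  have "W \<subseteq> UNIV \<times> {1..4}"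
    using assms(3) by (auto simp: two_full_def W2_def)
  moreover have "has_bench h (mirror W) 1 2"
    using two_full_has_bench_1_2[OF assms(2) k two_full_mirror[OF assms(3)]] .
  ultimately show "has_bench h W 4 3"
    by (rule has_bench_mirror)
qed

end
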